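(* Let $G=Z_{2^{\lambda_1}}\times\cdots\times Z_{2^{\lambda_n}}$ with $\lambda_1\le\cdots\le\lambda_n$. The lattice of characteristic subgroups of $G$ is distributive if and only if every characteristic subgroup of $G$ is regular.
   Context: Tuples are ordered componentwise; for $\mathbf a$ with $\mathbf 0\le\mathbf a\le(\lambda_1,\dots,\lambda_n)$, $T(\mathbf a)$ is the set of $(g_1,\dots,g_n)\in G$ with $|g_i|=2^{a_i}$ for all $i$, and $R(\mathbf a)=\bigcup_{\mathbf b\le\mathbf a}T(\mathbf b)$. A subgroup is regular if it equals $R(\mathbf a)$ for some such tuple $\mathbf a$. *)

theory Defs
  imports "HOL-Algebra.Algebra"
begin

text \<open>The group G = Z_{2^lam_0} x ... x Z_{2^lam_(n-1)} (indices shifted to 0..n-1),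
  as the product of the additive groups of integers modulo 2^lam_i.\<close>
definition cyc2 :: "(nat \<Rightarrow> nat) \<Rightarrow> nat \<Rightarrow> int monoid" where
  "cyc2 lam i = integer_mod_group (2 ^ lam i)"

definition Gtuple :: "nat \<Rightarrow> (nat \<Rightarrow> nat) \<Rightarrow> (nat \<Rightarrow> int) monoid" where
  "Gtuple n lam = product_group {0..<n} (cyc2 lam)"

definition Tset :: "nat \<Rightarrow> (nat \<Rightarrow> nat) \<Rightarrow> (nat \<Rightarrow> nat) \<Rightarrow> (nat \<Rightarrow> int) set" where
  "Tset n lam a = {g \<in> carrier (Gtuple n lam).
      \<forall>i<n. group.ord (cyc2 lam i) (g i) = 2 ^ a i}"

definition Rset :: "nat \<Rightarrow> (nat \<Rightarrow> nat) \<Rightarrow> (nat \<Rightarrow> nat) \<Rightarrow> (nat \<Rightarrow> int) set" where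
  "Rset n lam a = \<Union> {Tset n lam b | b. \<forall>i<n. b i \<le> a i}"

definition regular_subgroup :: "nat \<Rightarrow> (nat \<Rightarrow> nat) \<Rightarrow> (nat \<Rightarrow> int) set \<Rightarrow> bool" where
  "regular_subgroup n lam H \<longleftrightarrow>
     (\<exists>a. (\<forall>i<n. a i \<le> lam i) \<and> H = Rset n lam a)"

definition characteristic :: "'a set \<Rightarrow> ('a, 'b) monoid_scheme \<Rightarrow> bool" where
  "characteristic H G \<longleftrightarrow> subgroup H G \<and> (\<forall>\<phi>\<in>auto G. \<phi> ` H = H)"

definition char_lattice_distributive :: "('a, 'b) monoid_scheme \<Rightarrow> bool" where
  "char_lattice_distributive G \<longleftrightarrow>
     (\<forall>A B C. characteristic A G \<and> characteristic B G \<and> characteristic C G \<longrightarrow>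
        A \<inter> generate G (B \<union> C) = generate G ((A \<inter> B) \<union> (A \<inter> C)))"

end

theory Submission
  imports Defs
begin

text \<open>
  The regular subgroups are the sets R(a) = {g. 2^(a i) * g i = 0 for all i}, and
  R(a) \<inter> R(b) = R(min a b), \<langle>R(a) \<union> R(b)\<rangle> = R(max a b). So if every characteristic subgroup is
  regular, the lattice of characteristic subgroups is a sublattice of (\<nat>^n, min, max), hence
  distributive.

  Conversely, a subgroup H is regular as soon as it contains, with each of its elements h, every
  element single_coord i (h i) supported on one coordinate: a subgroup of a cyclic 2-group contains
  every element whose order is at most that of one of its elements. Suppose H is characteristic,
  h \<in> H, single_coord i (h i) \<notin> H, and let 2^m be the order of h i; then every element of H
  supported on coordinate i has order less than 2^m. The transvections adding 2^(lam k - lam j)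
  times the j-th coordinate to the k-th are automorphisms, so H is closed under moving components
  between coordinates. This yields characteristic regular subgroups R(e), R(c) with
  h \<in> R(max e c), e i < m and c i = m. Distributivity splits h = u + v with u \<in> H \<inter> R(e) and
  v \<in> H \<inter> R(c); then v i has order 2^m and dominates the other components of v, and moving
  components puts single_coord k (v k) into H, first for k \<noteq> i and then for k = i:
  a contradiction.
\<close>

section \<open>Exponents of orders in the integers modulo 2^l\<close>

definition ord_exp :: "nat \<Rightarrow> int \<Rightarrow> nat" where
  "ord_exp l y = (LEAST t. (2::int) ^ l dvd 2 ^ t * y)"

lemma ord_exp_le_iff: "ord_exp l y \<le> t \<longleftrightarrow> (2::int) ^ l dvd 2 ^ t * y"
proof
  have "(2::int) ^ l dvd 2 ^ l * y" by simp
  then have "(2::int) ^ l dvd 2 ^ ord_exp l y * y"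
    unfolding ord_exp_def by (rule LeastI)
  moreover assume "ord_exp l y \<le> t"
  then have "(2::int) ^ t * y = 2 ^ (t - ord_exp l y) * (2 ^ ord_exp l y * y)"
    by (simp flip: power_add)
  ultimately show "(2::int) ^ l dvd 2 ^ t * y"
    by (metis dvd_mult)
qed (simp add: ord_exp_def Least_le)

lemma pow_ord_exp_dvd: "(2::int) ^ l dvd 2 ^ ord_exp l y * y"
  using ord_exp_le_iff by blast

lemma ord_exp_le: "ord_exp l y \<le> l"
  by (simp add: ord_exp_le_iff)

lemma ord_exp_mod [simp]: "ord_exp l (y mod 2 ^ l) = ord_exp l y"
proof -
  have "ord_exp l (y mod 2 ^ l) \<le> t \<longleftrightarrow> ord_exp l y \<le> t" for t
    unfolding ord_exp_le_iff by (simp add: dvd_eq_mod_eq_0 mod_mult_right_eq)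
  from this[of "ord_exp l y"] this[of "ord_exp l (y mod 2 ^ l)"] show ?thesis
    by simp
qed

lemma ord_exp_add: "ord_exp l (x + y) \<le> max (ord_exp l x) (ord_exp l y)"
  unfolding ord_exp_le_iff distrib_left
  by (intro dvd_add; simp only: ord_exp_le_iff[symmetric]; simp)

lemma ord_exp_uminus [simp]: "ord_exp l (- y) = ord_exp l y"
  unfolding ord_exp_def by simp

lemma ord_exp_0 [simp]: "ord_exp l 0 = 0"
  using ord_exp_le_iff[of l 0 0] by simp

lemma ord_exp_eq_0_iff:
  assumes "0 \<le> y" "y < 2 ^ l"
  shows "ord_exp l y = 0 \<longleftrightarrow> y = 0"
proof
  assume "ord_exp l y = 0"
  then have "(2::int) ^ l dvd y"
    using ord_exp_le_iff[of l y 0] by simp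
  with assms show "y = 0"
    by (metis zdvd_imp_le not_le order_le_less)
qed simp

lemma ord_exp_shift:
  "ord_exp lj x \<le> ord_exp li (2 ^ (li - lj) * x) + (lj - li)"
proof -
  define t where "t = ord_exp li (2 ^ (li - lj) * x)"
  have d: "(2::int) ^ li dvd 2 ^ (li - lj) * (2 ^ t * x)"
    using pow_ord_exp_dvd[of li "2 ^ (li - lj) * x"] by (simp add: t_def mult.left_commute)
  have "(2::int) ^ lj dvd 2 ^ (t + (lj - li)) * x"
  proof (cases "lj \<le> li")
    case True
    then have "(2::int) ^ li = 2 ^ (li - lj) * 2 ^ lj" by (simp flip: power_add)
    with d True show ?thesis by simp
  next
    case False
    then have "(2::int) ^ li dvd 2 ^ t * x"
      using d by simp
    then have "(2::int) ^ (lj - li) * 2 ^ li dvd 2 ^ (lj - li) * (2 ^ t * x)"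
      by (rule mult_dvd_mono[OF dvd_refl])
    moreover have "(2::int) ^ (lj - li) * 2 ^ li = 2 ^ lj"
      using False by (simp flip: power_add)
    moreover have "(2::int) ^ (lj - li) * (2 ^ t * x) = 2 ^ (t + (lj - li)) * x"
      by (simp add: power_add)
    ultimately show ?thesis
      by (simp only:)
  qed
  then show ?thesis
    by (simp add: ord_exp_le_iff t_def)
qed

lemma exists_multiple_if_ord_exp_le:
  assumes y: "0 \<le> y" "y < 2 ^ l" and le: "ord_exp l y \<le> ord_exp l z"
  shows "\<exists>k::nat. (int k * z) mod 2 ^ l = y"
proof (cases "ord_exp l z = 0")
  case True
  with y le show ?thesis by (intro exI[of _ 0]) (simp add: ord_exp_eq_0_iff)
next
  case False
  define e where "e = ord_exp l z"
  have e: "e \<le> l" "0 < e" using False ord_exp_le by (auto simp: e_def)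
  have split: "(2::int) ^ l = 2 ^ e * 2 ^ (l - e)" using e by (simp flip: power_add)
  have "(2::int) ^ l dvd 2 ^ e * z" "(2::int) ^ l dvd 2 ^ e * y"
    using le by (simp_all add: e_def flip: ord_exp_le_iff)
  then have "(2::int) ^ (l - e) dvd z" "(2::int) ^ (l - e) dvd y"
    unfolding split by simp_all
  then obtain u w where u: "z = 2 ^ (l - e) * u" and w: "y = 2 ^ (l - e) * w"
    by (meson dvdE)
  have "odd u"
  proof
    assume "even u"
    then obtain u' where "u = 2 * u'" by blast
    then have "2 ^ (e - 1) * z = 2 ^ (e - 1 + 1 + (l - e)) * u'"
      by (simp add: u power_add mult_ac)
    also have "e - 1 + 1 + (l - e) = l"
      using e by simp
    finally have "2 ^ (e - 1) * z = 2 ^ l * u'" .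
    then have "ord_exp l z \<le> e - 1"
      by (simp add: ord_exp_le_iff)
    then show False using e by (simp add: e_def)
  qed
  then have "gcd u ((2::int) ^ l) = 1" by simp
  then obtain a b where ab: "a * u + b * 2 ^ l = (1::int)"
    using bezout_int[of u "2 ^ l"] by auto
  define k where "k = nat ((w * a) mod 2 ^ l)"
  have "(int k * z) mod 2 ^ l = (w * a * z) mod 2 ^ l"
    by (simp add: k_def mod_mult_left_eq)
  also have "w * a * z = y * (a * u)"
    by (simp add: u w mult_ac)
  also have "\<dots> = y * (1 - b * 2 ^ l)"
    using ab by (simp add: eq_diff_eq)
  also have "\<dots> = y - 2 ^ l * (b * y)"
    by (simp add: algebra_simps)
  also have "(y - 2 ^ l * (b * y)) mod 2 ^ l = y"
    using y by (simp add: mod_diff_eq[symmetric])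
  finally show ?thesis by blast
qed

lemma ord_exp_pow2_mult: "ord_exp l (2 ^ s * q) \<le> l - s"
proof -
  have "(2::int) ^ l dvd 2 ^ (l - s) * (2 ^ s * q)"
    by (simp add: mult.assoc[symmetric] le_imp_power_dvd flip: power_add)
  then show ?thesis by (simp add: ord_exp_le_iff)
qed

lemma mult_pow2_mod_mod:
  assumes "l \<le> c + m"
  shows "(2 ^ c * (a mod 2 ^ m)) mod 2 ^ l = (2 ^ c * a) mod (2::int) ^ l"
proof -
  have "(2::int) ^ l dvd 2 ^ (c + m)"
    using assms by (rule le_imp_power_dvd)
  then have "(2::int) ^ l dvd 2 ^ c * (2 ^ m * (a div 2 ^ m))"
    unfolding power_add mult.assoc[symmetric] by (rule dvd_mult2)
  then have "(2 ^ c * (a mod 2 ^ m) + 2 ^ c * (2 ^ m * (a div 2 ^ m))) mod 2 ^ l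
      = (2 ^ c * (a mod 2 ^ m)) mod (2::int) ^ l"
    by (simp add: dvd_eq_mod_eq_0 mod_add_right_eq[symmetric])
  then show ?thesis
    by (simp flip: distrib_left)
qed

lemma (in comm_group) generate_Un_subset_set_mult:
  assumes "subgroup U G" "subgroup V G"
  shows "generate G (U \<union> V) \<subseteq> U <#> V"
proof (rule generate_subgroup_incl[OF _ mult_subgroups[OF assms]])
  have "u \<in> U <#> V" "v \<in> U <#> V" if "u \<in> U" "v \<in> V" for u v
  proof -
    have "u = u \<otimes> \<one>" "v = \<one> \<otimes> v"
      using that assms by (auto dest: subgroup.mem_carrier)
    then show "u \<in> U <#> V" "v \<in> U <#> V"
      using that assms unfolding set_mult_def by (auto intro: subgroup.one_closed)
  qed
  then show "U \<union> V \<subseteq> U <#> V"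
    using assms by (blast intro: subgroup.one_closed)
qed

lemma (in comm_group) unipotent_auto:
  assumes f: "f \<in> hom G G" and ff: "\<And>x. x \<in> carrier G \<Longrightarrow> f (f x) = \<one>"
  shows "(\<lambda>x\<in>carrier G. x \<otimes> f x) \<in> auto G"
proof -
  interpret f: group_hom G G f
    by (simp add: group_hom_def group_hom_axioms_def f is_group)
  have fc: "f x \<in> carrier G" if "x \<in> carrier G" for x
    using f that by (rule hom_in_carrier)
  have fm: "f (x \<otimes> y) = f x \<otimes> f y" if "x \<in> carrier G" "y \<in> carrier G" for x y
    using f that by (rule hom_mult)
  have hom: "(\<lambda>x\<in>carrier G. x \<otimes> f x) \<in> hom G G"
    by (rule homI) (auto simp: fc fm m_ac)
  have "bij_betw (\<lambda>x\<in>carrier G. x \<otimes> f x) (carrier G) (carrier G)"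
    by (rule bij_betw_byWitness[where f' = "\<lambda>x. x \<otimes> inv (f x)"]) (auto simp: fc fm ff m_assoc)
  then show ?thesis
    using hom by (simp add: auto_def Bij_def)
qed

lemma characteristicI_finite:
  assumes "finite (carrier G)" "subgroup H G"
    and "\<And>\<phi>. \<phi> \<in> auto G \<Longrightarrow> \<phi> ` H \<subseteq> H"
  shows "characteristic H G"
  unfolding characteristic_def
proof (intro conjI ballI assms(2))
  fix \<phi> assume "\<phi> \<in> auto G"
  then have "inj_on \<phi> H"
    using assms(2) by (auto simp: auto_def Bij_def bij_betw_def dest: subgroup.subset intro: inj_on_subset)
  then show "\<phi> ` H = H"
    using assms \<open>\<phi> \<in> auto G\<close> by (intro endo_inj_surj) (auto intro: finite_subset dest: subgroup.subset)
qed

section \<open>Coordinates and regular subgroups\<close>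

lemma carrier_cyc2 [simp]: "carrier (cyc2 lam i) = {0..<2 ^ lam i}"
  by (simp add: cyc2_def carrier_integer_mod_group)

lemma ord_cyc2:
  assumes "y \<in> carrier (cyc2 lam i)"
  shows "group.ord (cyc2 lam i) y = 2 ^ ord_exp (lam i) y"
proof -
  interpret group "cyc2 lam i" by (simp add: cyc2_def)
  have ord_dvd: "ord y dvd 2 ^ t \<longleftrightarrow> ord_exp (lam i) y \<le> t" for t
    using pow_eq_id[OF assms, of "2 ^ t"] by (simp add: cyc2_def ord_exp_le_iff dvd_eq_mod_eq_0)
  then obtain s where s: "ord y = 2 ^ s"
    using divides_primepow_nat[of 2 "ord y" "lam i"] ord_exp_le by auto
  have "s \<le> t \<longleftrightarrow> ord_exp (lam i) y \<le> t" for t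
    using ord_dvd[of t] power_dvd_imp_le le_imp_power_dvd by (fastforce simp: s)
  from this[of s] this[of "ord_exp (lam i) y"] s show ?thesis
    by simp
qed

context
  fixes n :: nat and lam :: "nat \<Rightarrow> nat"
begin

private abbreviation (input) G where "G \<equiv> Gtuple n lam"

lemma carrier_Gtuple: "carrier G = (\<Pi>\<^sub>E i\<in>{0..<n}. {0..<2 ^ lam i})"
  by (simp add: Gtuple_def)

lemma mult_Gtuple_apply [simp]: "i < n \<Longrightarrow> (x \<otimes>\<^bsub>G\<^esub> y) i = (x i + y i) mod 2 ^ lam i"
  by (simp add: Gtuple_def cyc2_def)

lemma one_Gtuple: "\<one>\<^bsub>G\<^esub> = (\<lambda>i\<in>{0..<n}. 0)"
  by (simp add: Gtuple_def cyc2_def)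

lemma comm_group_Gtuple: "comm_group G"
proof -
  have "group G" by (simp add: Gtuple_def cyc2_def)
  then show ?thesis
    by (rule group.group_comm_groupI) (auto simp: Gtuple_def cyc2_def add.commute)
qed

interpretation comm_group G
  by (rule comm_group_Gtuple)

lemma Gtuple_eqI: "x \<in> carrier G \<Longrightarrow> y \<in> carrier G \<Longrightarrow> (\<And>i. i < n \<Longrightarrow> x i = y i) \<Longrightarrow> x = y"
  by (rule PiE_ext[of _ "{0..<n}" "\<lambda>i. {0..<2 ^ lam i}"]) (auto simp: carrier_Gtuple)

lemma restrict_mem_carrier_Gtuple:
  "(\<And>i. i < n \<Longrightarrow> 0 \<le> f i \<and> f i < 2 ^ lam i) \<Longrightarrow> (\<lambda>i\<in>{0..<n}. f i) \<in> carrier G"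
  by (simp add: carrier_Gtuple)

lemma mod_Gtuple_apply [simp]: "g \<in> carrier G \<Longrightarrow> i < n \<Longrightarrow> g i mod 2 ^ lam i = g i"
  by (auto simp: carrier_Gtuple PiE_iff)

lemma finite_carrier_Gtuple: "finite (carrier G)"
  by (simp add: carrier_Gtuple finite_PiE)

lemma coord_hom: "i < n \<Longrightarrow> (\<lambda>x. x i) \<in> hom G (cyc2 lam i)"
  by (rule homI) (auto simp: carrier_Gtuple PiE_iff cyc2_def carrier_integer_mod_group)

lemma pow_Gtuple_apply:
  "x \<in> carrier G \<Longrightarrow> i < n \<Longrightarrow> (x [^]\<^bsub>G\<^esub> k) i = (int k * x i) mod 2 ^ lam i"
  using hom_nat_pow[OF coord_hom] by (simp add: cyc2_def)

lemma inv_Gtuple_apply: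
  assumes "x \<in> carrier G" "i < n"
  shows "(inv\<^bsub>G\<^esub> x) i = (- x i) mod 2 ^ lam i"
proof -
  interpret group_hom G "cyc2 lam i" "\<lambda>x. x i"
    by (simp add: group_hom_def group_hom_axioms_def coord_hom assms(2)) (simp add: cyc2_def)
  show ?thesis
    using hom_inv assms by (simp add: cyc2_def carrier_Gtuple PiE_iff carrier_integer_mod_group)
qed

lemma ord_exp_apply_le_if_pow_eq_one:
  assumes "x \<in> carrier G" "x [^]\<^bsub>G\<^esub> (2 ^ t :: nat) = \<one>\<^bsub>G\<^esub>" "k < n"
  shows "ord_exp (lam k) (x k) \<le> t"
  using assms pow_Gtuple_apply[of x k "2 ^ t"]
  by (simp add: one_Gtuple ord_exp_le_iff dvd_eq_mod_eq_0)

lemma ord_exp_pow2_pow_apply: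
  assumes "q \<in> carrier G" "k < n"
  shows "ord_exp (lam k) ((q [^]\<^bsub>G\<^esub> (2 ^ s :: nat)) k) \<le> lam k - s"
  using assms ord_exp_pow2_mult by (simp add: pow_Gtuple_apply)

lemma mem_Rset_iff: "g \<in> Rset n lam a \<longleftrightarrow> g \<in> carrier G \<and> (\<forall>i<n. ord_exp (lam i) (g i) \<le> a i)"
proof -
  have "g \<in> Tset n lam b \<longleftrightarrow> g \<in> carrier G \<and> (\<forall>i<n. ord_exp (lam i) (g i) = b i)" for b
  proof -
    have "group.ord (cyc2 lam i) (g i) = 2 ^ ord_exp (lam i) (g i)" if "g \<in> carrier G" "i < n" for i
      using that by (intro ord_cyc2) (auto simp: carrier_Gtuple PiE_iff)
    then show ?thesis
      unfolding Tset_def Gtuple_def by auto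
  qed
  then show ?thesis
    unfolding Rset_def
    by (auto intro!: exI[of _ "\<lambda>i. ord_exp (lam i) (g i)"])
qed

lemma regular_subgroup_iff: "regular_subgroup n lam H \<longleftrightarrow> (\<exists>a. H = Rset n lam a)"
proof
  assume "\<exists>a. H = Rset n lam a"
  then obtain a where "H = Rset n lam a" ..
  moreover have "Rset n lam a = Rset n lam (\<lambda>i. min (a i) (lam i))"
    using ord_exp_le by (auto simp: mem_Rset_iff)
  ultimately show "regular_subgroup n lam H"
    unfolding regular_subgroup_def by (intro exI[of _ "\<lambda>i. min (a i) (lam i)"]) simp
qed (auto simp: regular_subgroup_def)

lemma subgroup_Rset: "subgroup (Rset n lam a) G"
proof (rule subgroupI)
  show "Rset n lam a \<subseteq> carrier G"
    by (auto simp: mem_Rset_iff)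
  have "\<one>\<^bsub>G\<^esub> \<in> Rset n lam a"
    by (simp add: mem_Rset_iff) (simp add: one_Gtuple)
  then show "Rset n lam a \<noteq> {}"
    by blast
next
  fix x y assume x: "x \<in> Rset n lam a" and y: "y \<in> Rset n lam a"
  have "ord_exp (lam i) (x i + y i) \<le> a i" if "i < n" for i
    using x y that ord_exp_add[of "lam i" "x i" "y i"] by (force simp: mem_Rset_iff)
  then show "x \<otimes>\<^bsub>G\<^esub> y \<in> Rset n lam a"
    using x y by (simp add: mem_Rset_iff)
  then show "inv\<^bsub>G\<^esub> x \<in> Rset n lam a"
    using x by (auto simp: mem_Rset_iff inv_Gtuple_apply)
qed

text \<open>Reducing modulo 2^(lam i) makes single_coord i a homomorphism from the integers.\<close>
definition single_coord :: "nat \<Rightarrow> int \<Rightarrow> nat \<Rightarrow> int" where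
  "single_coord i z = (\<lambda>j\<in>{0..<n}. if j = i then z mod 2 ^ lam i else 0)"

lemma single_coord_apply [simp]:
  "j < n \<Longrightarrow> single_coord i z j = (if j = i then z mod 2 ^ lam i else 0)"
  by (simp add: single_coord_def)

lemma single_coord_mem_carrier [simp]: "single_coord i z \<in> carrier G"
  unfolding single_coord_def by (rule restrict_mem_carrier_Gtuple) simp

lemma single_coord_hom: "i < n \<Longrightarrow> single_coord i \<in> hom integer_group G"
  by (rule homI) (auto intro!: Gtuple_eqI simp: mod_add_eq)

lemma single_coord_mod [simp]: "single_coord i (z mod 2 ^ lam i) = single_coord i z"
  by (simp add: single_coord_def cong: if_cong)

lemma single_coord_0 [simp]: "single_coord i 0 = \<one>\<^bsub>G\<^esub>"
  by (simp add: single_coord_def one_Gtuple cong: if_cong)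

lemma single_coord_pow: "i < n \<Longrightarrow> single_coord i z [^]\<^bsub>G\<^esub> k = single_coord i (int k * z)"
  using hom_nat_pow[OF single_coord_hom] by simp

lemma single_coord_mem_Rset_iff:
  "i < n \<Longrightarrow> single_coord i z \<in> Rset n lam a \<longleftrightarrow> ord_exp (lam i) z \<le> a i"
  by (auto simp: mem_Rset_iff)

lemma hom_mem_subgroup_if_single_coords:
  assumes g: "g \<in> carrier G" and f: "f \<in> hom G H" "group H" and K: "subgroup K H"
    and single: "\<And>i. i < n \<Longrightarrow> f (single_coord i (g i)) \<in> K"
  shows "f g \<in> K"
proof -
  interpret f: group_hom G H f
    by (simp add: group_hom_def group_hom_axioms_def f is_group)
  define prefix where "prefix p = (\<lambda>j\<in>{0..<n}. if j < p then g j else 0)" for p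
  have prefix_mem: "prefix p \<in> carrier G" for p
    unfolding prefix_def using g by (intro restrict_mem_carrier_Gtuple) (auto simp: carrier_Gtuple PiE_iff)
  have "f (prefix p) \<in> K" if "p \<le> n" for p
    using that
  proof (induction p)
    case 0
    then show ?case
      using K by (simp add: prefix_def subgroup.one_closed flip: one_Gtuple)
  next
    case (Suc p)
    have "prefix (Suc p) = prefix p \<otimes>\<^bsub>G\<^esub> single_coord p (g p)"
      using g prefix_mem by (intro Gtuple_eqI) (auto simp: prefix_def)
    then show ?case
      using Suc K single by (simp add: prefix_mem subgroup.m_closed)
  qed
  moreover have "prefix n = g"
    using g prefix_mem by (intro Gtuple_eqI) (auto simp: prefix_def)
  ultimately show ?thesis
    by blast
qed

lemma mem_subgroup_if_single_coords:
  assumes "g \<in> carrier G" "subgroup K G" "\<And>i. i < n \<Longrightarrow> single_coord i (g i) \<in> K"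
  shows "g \<in> K"
  using hom_mem_subgroup_if_single_coords[of g "\<lambda>x. x" G K] assms
  by (simp add: homI is_group)

lemma Rset_Int: "Rset n lam a \<inter> Rset n lam b = Rset n lam (\<lambda>i. min (a i) (b i))"
  by (auto simp: mem_Rset_iff)

lemma generate_Rset_Un:
  "generate G (Rset n lam b \<union> Rset n lam c) = Rset n lam (\<lambda>i. max (b i) (c i))"
proof
  show "generate G (Rset n lam b \<union> Rset n lam c) \<subseteq> Rset n lam (\<lambda>i. max (b i) (c i))"
    by (intro generate_subgroup_incl subgroup_Rset) (auto simp: mem_Rset_iff le_max_iff_disj)
next
  show "Rset n lam (\<lambda>i. max (b i) (c i)) \<subseteq> generate G (Rset n lam b \<union> Rset n lam c)"
  proof
    fix g assume g: "g \<in> Rset n lam (\<lambda>i. max (b i) (c i))"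
    show "g \<in> generate G (Rset n lam b \<union> Rset n lam c)"
    proof (rule mem_subgroup_if_single_coords)
      show "g \<in> carrier G"
        using g by (simp add: mem_Rset_iff)
      show "subgroup (generate G (Rset n lam b \<union> Rset n lam c)) G"
        by (intro generate_is_subgroup) (auto simp: mem_Rset_iff)
      fix i assume "i < n"
      then have "single_coord i (g i) \<in> Rset n lam b \<union> Rset n lam c"
        using g by (auto simp: single_coord_mem_Rset_iff mem_Rset_iff le_max_iff_disj)
      then show "single_coord i (g i) \<in> generate G (Rset n lam b \<union> Rset n lam c)"
        by (rule generate.incl)
    qed
  qed
qed

lemma distributive_if_regular:
  assumes "\<forall>H. characteristic H G \<longrightarrow> regular_subgroup n lam H"
  shows "char_lattice_distributive G"
  unfolding char_lattice_distributive_def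
proof (intro allI impI)
  fix A B C assume "characteristic A G \<and> characteristic B G \<and> characteristic C G"
  then obtain a b c where "A = Rset n lam a" "B = Rset n lam b" "C = Rset n lam c"
    using assms by (meson regular_subgroup_iff)
  moreover have "(\<lambda>i. min (a i) (max (b i) (c i))) = (\<lambda>i. max (min (a i) (b i)) (min (a i) (c i)))"
    by (rule ext) (simp add: min_def max_def)
  ultimately show "A \<inter> generate G (B \<union> C) = generate G (A \<inter> B \<union> A \<inter> C)"
    by (simp add: generate_Rset_Un Rset_Int)
qed

lemma single_coord_mem_if_ord_exp_le:
  assumes K: "subgroup K G" and p: "p < n" and z: "single_coord p z \<in> K"
    and le: "ord_exp (lam p) y \<le> ord_exp (lam p) z"
  shows "single_coord p y \<in> K"
proof -
  obtain k :: nat where "(int k * z) mod 2 ^ lam p = y mod 2 ^ lam p"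
    using exists_multiple_if_ord_exp_le[of "y mod 2 ^ lam p" "lam p" z] le by auto
  then have "single_coord p y = single_coord p z [^]\<^bsub>G\<^esub> k"
    using p by (metis single_coord_mod single_coord_pow)
  also have "\<dots> \<in> K"
    using subgroup_int_pow_closed[OF K z, of "int k"] by (simp add: int_pow_int)
  finally show ?thesis .
qed

lemma single_coord_mem_if_others:
  assumes K: "subgroup K G" and i: "i < n" and v: "v \<in> K"
    and others: "\<And>k. k < n \<Longrightarrow> k \<noteq> i \<Longrightarrow> single_coord k (v k) \<in> K"
  shows "single_coord i (v i) \<in> K"
proof -
  have vc: "v \<in> carrier G" using K v by (rule subgroup.mem_carrier)
  define v' where "v' = (\<lambda>j\<in>{0..<n}. if j = i then 0 else v j)"
  have v'c: "v' \<in> carrier G"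
    unfolding v'_def using vc by (intro restrict_mem_carrier_Gtuple) (auto simp: carrier_Gtuple PiE_iff)
  have "v' \<in> K"
  proof (rule mem_subgroup_if_single_coords[OF v'c K])
    fix k assume "k < n"
    then show "single_coord k (v' k) \<in> K"
      using others K by (cases "k = i") (simp_all add: v'_def subgroup.one_closed)
  qed
  moreover have "v = v' \<otimes>\<^bsub>G\<^esub> single_coord i (v i)"
    using vc v'c by (intro Gtuple_eqI) (auto simp: v'_def)
  then have "single_coord i (v i) = inv\<^bsub>G\<^esub> v' \<otimes>\<^bsub>G\<^esub> v"
    using vc v'c by (simp add: inv_solve_left)
  ultimately show ?thesis
    using K v by (simp add: subgroup.m_closed subgroup.m_inv_closed)
qed

lemma Rset_if_single_coord_closed:
  assumes H: "subgroup H G" and closed: "\<And>i h. i < n \<Longrightarrow> h \<in> H \<Longrightarrow> single_coord i (h i) \<in> H"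
  shows "\<exists>a. H = Rset n lam a"
proof -
  define a where "a i = Max ((\<lambda>h. ord_exp (lam i) (h i)) ` H)" for i
  have fin: "finite H"
    using finite_carrier_Gtuple H by (meson finite_subset subgroup.subset)
  have ne: "H \<noteq> {}"
    using H subgroup.one_closed by blast
  have "H = Rset n lam a"
  proof
    show "H \<subseteq> Rset n lam a"
      using fin H by (auto simp: mem_Rset_iff a_def subgroup.mem_carrier)
  next
    show "Rset n lam a \<subseteq> H"
    proof
      fix g assume g: "g \<in> Rset n lam a"
      show "g \<in> H"
      proof (rule mem_subgroup_if_single_coords[OF _ H])
        show "g \<in> carrier G" using g by (simp add: mem_Rset_iff)
        fix p assume p: "p < n"
        have "a p \<in> (\<lambda>h. ord_exp (lam p) (h p)) ` H"
          unfolding a_def using fin ne by (intro Max_in) auto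
        then obtain h where h: "h \<in> H" "a p = ord_exp (lam p) (h p)" ..
        show "single_coord p (g p) \<in> H"
        proof (rule single_coord_mem_if_ord_exp_le[OF H p closed[OF p h(1)]])
          show "ord_exp (lam p) (g p) \<le> ord_exp (lam p) (h p)"
            using g p by (simp add: mem_Rset_iff flip: h(2))
        qed
      qed
    qed
  qed
  then show ?thesis by blast
qed

section \<open>Characteristic regular subgroups\<close>

text \<open>For increasing lam and r \<le> lam this says that r and lam - r are both increasing.\<close>
definition admissible_tuple :: "(nat \<Rightarrow> nat) \<Rightarrow> bool" where
  "admissible_tuple r \<longleftrightarrow> (\<forall>j<n. \<forall>k<n. r j - (lam j - lam k) \<le> r k)"

lemma hom_single_coord_mem_Rset:
  assumes r: "admissible_tuple r" and f: "f \<in> hom G G" and p: "p < n"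
    and x: "ord_exp (lam p) x \<le> r p"
  shows "f (single_coord p x) \<in> Rset n lam r"
proof -
  interpret f: group_hom G G f
    by (simp add: group_hom_def group_hom_axioms_def f is_group)
  define s where "s = lam p - r p"
  have "(2::int) ^ s dvd x"
  proof (cases "r p \<le> lam p")
    case True
    then have "(2::int) ^ r p * 2 ^ s dvd 2 ^ r p * x"
      using x by (simp add: s_def ord_exp_le_iff flip: power_add)
    then show ?thesis by simp
  qed (simp add: s_def)
  then obtain w where w: "x = 2 ^ s * w" ..
  have "single_coord p x = single_coord p w [^]\<^bsub>G\<^esub> (2 ^ s :: nat)"
    by (simp add: single_coord_pow p w)
  then have "f (single_coord p x) = f (single_coord p w) [^]\<^bsub>G\<^esub> (2 ^ s :: nat)"
    by (simp add: f.hom_nat_pow)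
  then have div: "ord_exp (lam k) (f (single_coord p x) k) \<le> lam k - s" if "k < n" for k
    using that by (simp add: ord_exp_pow2_pow_apply)
  have "single_coord p (2 ^ r p * x) = \<one>\<^bsub>G\<^esub>"
    using x single_coord_mod[of p "2 ^ r p * x"] by (simp add: ord_exp_le_iff dvd_eq_mod_eq_0)
  then have "f (single_coord p x) [^]\<^bsub>G\<^esub> (2 ^ r p :: nat) = \<one>\<^bsub>G\<^esub>"
    by (simp add: single_coord_pow p flip: f.hom_nat_pow)
  then have tors: "ord_exp (lam k) (f (single_coord p x) k) \<le> r p" if "k < n" for k
    using that by (simp add: ord_exp_apply_le_if_pow_eq_one)
  have "ord_exp (lam k) (f (single_coord p x) k) \<le> r k" if k: "k < n" for k
  proof -
    have "r p - (lam p - lam k) \<le> r k"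
      using r p k by (simp add: admissible_tuple_def)
    with div[OF k] tors[OF k] show ?thesis
      unfolding s_def by linarith
  qed
  then show ?thesis
    by (simp add: mem_Rset_iff)
qed

lemma characteristic_Rset: "admissible_tuple r \<Longrightarrow> characteristic (Rset n lam r) G"
proof (rule characteristicI_finite[OF finite_carrier_Gtuple subgroup_Rset])
  fix \<phi> assume r: "admissible_tuple r" and \<phi>: "\<phi> \<in> auto G"
  then have hom: "\<phi> \<in> hom G G" by (simp add: auto_def)
  show "\<phi> ` Rset n lam r \<subseteq> Rset n lam r"
  proof
    fix y assume "y \<in> \<phi> ` Rset n lam r"
    then obtain g where g: "g \<in> Rset n lam r" and y: "y = \<phi> g" by blast
    show "y \<in> Rset n lam r"
      unfolding y
    proof (rule hom_mem_subgroup_if_single_coords[OF _ hom is_group subgroup_Rset])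
      show "g \<in> carrier G"
        using g by (simp add: mem_Rset_iff)
      fix i assume "i < n"
      with g show "\<phi> (single_coord i (g i)) \<in> Rset n lam r"
        by (intro hom_single_coord_mem_Rset[OF r hom]) (simp_all add: mem_Rset_iff)
    qed
  qed
qed

definition coord_transfer :: "nat \<Rightarrow> nat \<Rightarrow> (nat \<Rightarrow> int) \<Rightarrow> nat \<Rightarrow> int" where
  "coord_transfer i k g = single_coord k (2 ^ (lam k - lam i) * g i)"

lemma coord_transfer_hom:
  assumes "i < n" "k < n"
  shows "coord_transfer i k \<in> hom G G"
proof (rule homI)
  fix x y assume "x \<in> carrier G" "y \<in> carrier G"
  let ?c = "lam k - lam i"
  have "coord_transfer i k (x \<otimes>\<^bsub>G\<^esub> y) = single_coord k ((2 ^ ?c * ((x i + y i) mod 2 ^ lam i)) mod 2 ^ lam k)"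
    using assms by (simp add: coord_transfer_def)
  also have "\<dots> = single_coord k ((2 ^ ?c * (x i + y i)) mod 2 ^ lam k)"
    by (subst mult_pow2_mod_mod) simp_all
  also have "\<dots> = single_coord k (2 ^ ?c * x i) \<otimes>\<^bsub>G\<^esub> single_coord k (2 ^ ?c * y i)"
    using hom_mult[OF single_coord_hom[OF assms(2)]] by (simp add: distrib_left)
  finally show "coord_transfer i k (x \<otimes>\<^bsub>G\<^esub> y) = coord_transfer i k x \<otimes>\<^bsub>G\<^esub> coord_transfer i k y"
    by (simp add: coord_transfer_def)
qed (simp add: coord_transfer_def)

lemma coord_transfer_mem_characteristic:
  assumes H: "characteristic H G" and h: "h \<in> H" and ik: "i < n" "k < n" "i \<noteq> k"
  shows "single_coord k (2 ^ (lam k - lam i) * h i) \<in> H"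
proof -
  have sub: "subgroup H G" using H by (simp add: characteristic_def)
  have hc: "h \<in> carrier G" using sub h by (rule subgroup.mem_carrier)
  have "(\<lambda>x\<in>carrier G. x \<otimes>\<^bsub>G\<^esub> coord_transfer i k x) \<in> auto G"
    using ik by (intro unipotent_auto coord_transfer_hom) (simp_all add: coord_transfer_def)
  then have "(\<lambda>x\<in>carrier G. x \<otimes>\<^bsub>G\<^esub> coord_transfer i k x) ` H = H"
    using H unfolding characteristic_def by blast
  then have "h \<otimes>\<^bsub>G\<^esub> coord_transfer i k h \<in> H"
    using h hc by force
  then have "inv\<^bsub>G\<^esub> h \<otimes>\<^bsub>G\<^esub> (h \<otimes>\<^bsub>G\<^esub> coord_transfer i k h) \<in> H"
    using sub h by (simp add: subgroup.m_closed subgroup.m_inv_closed)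
  moreover have "coord_transfer i k h \<in> carrier G"
    by (simp add: coord_transfer_def)
  ultimately show ?thesis
    using hc by (simp add: coord_transfer_def m_assoc[symmetric])
qed

definition admissible_hull :: "(nat \<Rightarrow> nat) \<Rightarrow> nat \<Rightarrow> nat" where
  "admissible_hull r k = Max ((\<lambda>j. r j - (lam j - lam k)) ` {..<n})"

lemma admissible_tuple_admissible_hull: "admissible_tuple (admissible_hull r)"
  unfolding admissible_tuple_def
proof (intro allI impI)
  fix j k assume "j < n" "k < n"
  then have "admissible_hull r j \<in> (\<lambda>l. r l - (lam l - lam j)) ` {..<n}"
    unfolding admissible_hull_def by (intro Max_in) auto
  then obtain l where "l < n" "admissible_hull r j = r l - (lam l - lam j)"
    by auto
  moreover have "r l - (lam l - lam k) \<le> admissible_hull r k" if "l < n" for l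
    using that by (auto simp: admissible_hull_def)
  ultimately show "admissible_hull r j - (lam j - lam k) \<le> admissible_hull r k"
    by fastforce
qed

lemma le_admissible_hull: "k < n \<Longrightarrow> r k \<le> admissible_hull r k"
  unfolding admissible_hull_def by (rule Max_ge) (auto intro: image_eqI[where x = k])

section \<open>Distributivity forces regularity\<close>

lemma split_if_distributive:
  assumes D: "char_lattice_distributive G" and H: "characteristic H G"
    and a: "admissible_tuple a" and b: "admissible_tuple b"
    and h: "h \<in> H" "h \<in> Rset n lam (\<lambda>k. max (a k) (b k))"
  obtains u v where "u \<in> H" "u \<in> Rset n lam a" "v \<in> H" "v \<in> Rset n lam b" "h = u \<otimes>\<^bsub>G\<^esub> v"
proof -
  have sub: "subgroup H G" using H by (simp add: characteristic_def)
  have "h \<in> H \<inter> generate G (Rset n lam a \<union> Rset n lam b)"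
    using h by (simp add: generate_Rset_Un)
  also have "\<dots> = generate G (H \<inter> Rset n lam a \<union> H \<inter> Rset n lam b)"
    using D H characteristic_Rset[OF a] characteristic_Rset[OF b]
    unfolding char_lattice_distributive_def by blast
  also have "\<dots> \<subseteq> (H \<inter> Rset n lam a) <#>\<^bsub>G\<^esub> (H \<inter> Rset n lam b)"
    using sub by (intro generate_Un_subset_set_mult subgroups_Inter_pair subgroup_Rset)
  finally show ?thesis
    using that by (auto simp: set_mult_def)
qed

lemma single_coord_mem_if_dominant:
  assumes H: "characteristic H G" and v: "v \<in> H" and i: "i < n"
    and dominant: "\<And>k. k < n \<Longrightarrow> ord_exp (lam k) (v k) \<le> ord_exp (lam i) (v i) - (lam i - lam k)"
  shows "single_coord i (v i) \<in> H"
proof -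
  have sub: "subgroup H G" using H by (simp add: characteristic_def)
  show ?thesis
  proof (rule single_coord_mem_if_others[OF sub i v])
    fix k assume k: "k < n" "k \<noteq> i"
    show "single_coord k (v k) \<in> H"
    proof (rule single_coord_mem_if_ord_exp_le[OF sub k(1)
          coord_transfer_mem_characteristic[OF H v i k(1)]])
      show "ord_exp (lam k) (v k) \<le> ord_exp (lam k) (2 ^ (lam k - lam i) * v i)"
        using dominant[OF k(1)] ord_exp_shift[of "lam i" "v i" "lam k"] by linarith
    qed (use k in simp)
  qed
qed

lemma admissible_hull_off_coord_lt:
  assumes H: "characteristic H G" and h: "h \<in> H" and i: "i < n"
    and small: "\<And>z. single_coord i z \<in> H \<Longrightarrow> ord_exp (lam i) z < m"
  shows "admissible_hull (\<lambda>j. if j = i then 0 else ord_exp (lam j) (h j)) i < m"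
proof -
  have "(if j = i then 0 else ord_exp (lam j) (h j)) - (lam j - lam i) < m" if j: "j < n" for j
  proof (cases "j = i")
    case True
    then show ?thesis
      using small[of 0] H by (simp add: characteristic_def subgroup.one_closed)
  next
    case False
    then have "ord_exp (lam i) (2 ^ (lam i - lam j) * h j) < m"
      using small coord_transfer_mem_characteristic[OF H h j i] by blast
    with False show ?thesis
      using ord_exp_shift[of "lam j" "h j" "lam i"] by simp
  qed
  then show ?thesis
    unfolding admissible_hull_def using i by (subst Max_less_iff) auto
qed

lemma single_coord_mem_if_distributive:
  assumes D: "char_lattice_distributive G" and H: "characteristic H G"
    and h: "h \<in> H" and i: "i < n"
  shows "single_coord i (h i) \<in> H"
proof (rule ccontr)
  assume nin: "single_coord i (h i) \<notin> H"
  have sub: "subgroup H G" using H by (simp add: characteristic_def)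
  define m where "m = ord_exp (lam i) (h i)"
  have small: "ord_exp (lam i) z < m" if "single_coord i z \<in> H" for z
    using single_coord_mem_if_ord_exp_le[OF sub i that, of "h i"] nin unfolding m_def by linarith
  define e where "e = admissible_hull (\<lambda>j. if j = i then 0 else ord_exp (lam j) (h j))"
  define c where "c k = m - (lam i - lam k)" for k
  have "admissible_tuple e"
    unfolding e_def by (rule admissible_tuple_admissible_hull)
  moreover have "admissible_tuple c"
    unfolding admissible_tuple_def c_def by arith
  moreover have "ord_exp (lam k) (h k) \<le> max (e k) (c k)" if "k < n" for k
    using le_admissible_hull[OF that, of "\<lambda>j. if j = i then 0 else ord_exp (lam j) (h j)"]
    by (cases "k = i") (auto simp: e_def c_def m_def)
  then have "h \<in> Rset n lam (\<lambda>k. max (e k) (c k))"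
    using sub h by (simp add: mem_Rset_iff subgroup.mem_carrier)
  ultimately obtain u v where u: "u \<in> Rset n lam e" and v: "v \<in> H" "v \<in> Rset n lam c"
    and huv: "h = u \<otimes>\<^bsub>G\<^esub> v"
    using split_if_distributive[OF D H _ _ h(1)] by blast
  have "m \<le> max (ord_exp (lam i) (u i)) (ord_exp (lam i) (v i))"
    using ord_exp_add[of "lam i" "u i" "v i"] i by (simp add: m_def huv)
  moreover have "ord_exp (lam i) (u i) < m"
    using u i admissible_hull_off_coord_lt[OF H h i small] by (force simp: mem_Rset_iff e_def)
  ultimately have v_i: "m \<le> ord_exp (lam i) (v i)"
    by linarith
  have "single_coord i (v i) \<in> H"
    using v(2) v_i by (intro single_coord_mem_if_dominant[OF H v(1) i]) (force simp: mem_Rset_iff c_def)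
  then show False
    using small v_i by fastforce
qed

lemma regular_if_distributive:
  assumes "char_lattice_distributive G" "characteristic H G"
  shows "regular_subgroup n lam H"
  using Rset_if_single_coord_closed single_coord_mem_if_distributive[OF assms] assms(2)
  unfolding regular_subgroup_iff characteristic_def by blast

end

theorem mainTheorem11:
  fixes n :: nat and lam :: "nat \<Rightarrow> nat"
  assumes "\<And>i j. i \<le> j \<Longrightarrow> j < n \<Longrightarrow> lam i \<le> lam j"
  shows "char_lattice_distributive (Gtuple n lam) \<longleftrightarrow>
         (\<forall>H. characteristic H (Gtuple n lam) \<longrightarrow> regular_subgroup n lam H)"
  using regular_if_distributive distributive_if_regular by blast

end
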